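(* There exist two players with additive valuations over a finite set of goods (where some single goods may have value $0$ to a player) such that no allocation is both EFX and Pareto optimal.
   Context: A valuation is a function $v:2^M\to\mathbb{R}_{\ge0}$ with $v(\emptyset)=0$ that is monotone: $v(S)\le v(T)$ whenever $S\subseteq T$. It is additive if $v(S)=\sum_{g\in S}v(\{g\})$ for all $S\subseteq M$. An allocation is an ordered partition $(A_1,\dots,A_n)$ of $M$; parts may be empty. It is EFX if for all players $i,j$ and every $g\in A_j$ we have $v_i(A_i)\ge v_i(A_j\setminus\{g\})$. It is Pareto optimal (PO) if there is no allocation $B$ with $v_i(B_i)\ge v_i(A_i)$ for all $i$ and $v_j(B_j)>v_j(A_j)$ for some $j$. *)

theory Defs
  imports Complex_Main
begin

definition valuation :: "'g set \<Rightarrow> ('g set \<Rightarrow> real) \<Rightarrow> bool" where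
  "valuation M v \<longleftrightarrow> v {} = 0 \<and> (\<forall>S. S \<subseteq> M \<longrightarrow> v S \<ge> 0)
     \<and> (\<forall>S T. S \<subseteq> T \<and> T \<subseteq> M \<longrightarrow> v S \<le> v T)"

definition additive_val :: "'g set \<Rightarrow> ('g set \<Rightarrow> real) \<Rightarrow> bool" where
  "additive_val M v \<longleftrightarrow> (\<forall>S. S \<subseteq> M \<longrightarrow> v S = (\<Sum>g\<in>S. v {g}))"

definition allocation :: "nat \<Rightarrow> 'g set \<Rightarrow> (nat \<Rightarrow> 'g set) \<Rightarrow> bool" where
  "allocation n M A \<longleftrightarrow> (\<Union>i<n. A i) = M \<and>
     (\<forall>i<n. \<forall>j<n. i \<noteq> j \<longrightarrow> A i \<inter> A j = {})"

definition EFX :: "nat \<Rightarrow> (nat \<Rightarrow> 'g set \<Rightarrow> real) \<Rightarrow> (nat \<Rightarrow> 'g set) \<Rightarrow> bool" where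
  "EFX n v A \<longleftrightarrow> (\<forall>i<n. \<forall>j<n. \<forall>g\<in>A j. v i (A i) \<ge> v i (A j - {g}))"

definition pareto_optimal ::
  "nat \<Rightarrow> 'g set \<Rightarrow> (nat \<Rightarrow> 'g set \<Rightarrow> real) \<Rightarrow> (nat \<Rightarrow> 'g set) \<Rightarrow> bool" where
  "pareto_optimal n M v A \<longleftrightarrow> \<not> (\<exists>B. allocation n M B \<and> (\<forall>i<n. v i (B i) \<ge> v i (A i))
       \<and> (\<exists>j<n. v j (B j) > v j (A j)))"

end

theory Submission
  imports Defs
begin

text \<open>Take goods 0, 1, 2, valued 0, 1, 2 by player 0 and 1, 0, 2 by player 1. Moving a good from
  a player who values it at 0 to one who values it positively is a Pareto improvement, so
  in a Pareto optimal allocation good 1 belongs to player 0 and good 0 to player 1. Whoever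
  then receives good 2 is envied by the other player even after removing from that bundle
  the good the envier considers worthless, so the allocation is not EFX.\<close>

definition weight_val :: "'g set \<Rightarrow> ('g \<Rightarrow> real) \<Rightarrow> 'g set \<Rightarrow> real" where
  "weight_val M w S = (\<Sum>g\<in>S \<inter> M. w g)"

lemma weight_val_singleton: "g \<in> M \<Longrightarrow> weight_val M w {g} = w g"
  by (simp add: weight_val_def)

lemma valuation_weight_val:
  assumes "finite M" and "\<And>g. w g \<ge> 0"
  shows "valuation M (weight_val M w)"
  unfolding valuation_def weight_val_def
proof (intro conjI allI impI)
  fix S T
  assume "S \<subseteq> T \<and> T \<subseteq> M"
  then show "(\<Sum>g\<in>S \<inter> M. w g) \<le> (\<Sum>g\<in>T \<inter> M. w g)"
    using assms by (intro sum_mono2) auto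
qed (simp_all add: assms sum_nonneg)

lemma additive_val_weight_val: "additive_val M (weight_val M w)"
  unfolding additive_val_def
proof (intro allI impI)
  fix S assume "S \<subseteq> M"
  then show "weight_val M w S = (\<Sum>g\<in>S. weight_val M w {g})"
    by (auto simp: weight_val_def Int_absorb2 weight_val_singleton intro!: sum.cong)
qed

lemma additive_val_insert:
  assumes add: "additive_val M v" and "finite M" "S \<subseteq> M" "g \<in> M" "g \<notin> S"
  shows "v (insert g S) = v S + v {g}"
proof -
  have "finite S"
    using assms(2,3) by (rule finite_subset[rotated])
  have "v (insert g S) = (\<Sum>x\<in>insert g S. v {x})"
    using add assms(3,4) unfolding additive_val_def by blast
  also have "\<dots> = v {g} + (\<Sum>x\<in>S. v {x})"
    using \<open>finite S\<close> \<open>g \<notin> S\<close> by (rule sum.insert)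
  also have "(\<Sum>x\<in>S. v {x}) = v S"
    using add assms(3) unfolding additive_val_def by simp
  finally show ?thesis
    by simp
qed

lemma allocation_subset: "allocation n M A \<Longrightarrow> i < n \<Longrightarrow> A i \<subseteq> M"
  unfolding allocation_def by blast

lemma allocation_move_good:
  assumes "allocation n M A" "i < n" "j < n" "i \<noteq> j" "g \<in> A i"
  shows "allocation n M (A(i := A i - {g}, j := insert g (A j)))"
  using assms unfolding allocation_def by (auto split: if_splits)

lemma pareto_optimal_worthless_good:
  assumes alloc: "allocation n M A" and po: "pareto_optimal n M v A"
    and add: "\<forall>k<n. additive_val M (v k)" and "finite M"
    and ij: "i < n" "j < n" "i \<noteq> j"
    and worthless: "v i {g} = 0" and valued: "v j {g} > 0"
  shows "g \<notin> A i"
proof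
  assume g: "g \<in> A i"
  have "g \<notin> A j"
    using alloc ij g unfolding allocation_def by blast
  have "A i \<subseteq> M" "A j \<subseteq> M"
    using alloc ij by (simp_all add: allocation_subset)
  then have "g \<in> M"
    using g by blast
  have "v i (insert g (A i - {g})) = v i (A i - {g}) + v i {g}"
    using add ij \<open>finite M\<close> \<open>A i \<subseteq> M\<close> \<open>g \<in> M\<close>
    by (intro additive_val_insert) auto
  then have "v i (A i) = v i (A i - {g}) + v i {g}"
    using g by (simp add: insert_absorb)
  then have loss: "v i (A i - {g}) = v i (A i)"
    using worthless by simp
  have gain: "v j (insert g (A j)) > v j (A j)"
    using additive_val_insert[of M "v j" "A j" g] add ij \<open>finite M\<close> \<open>g \<in> M\<close> \<open>A j \<subseteq> M\<close>
      \<open>g \<notin> A j\<close> valued by simp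
  define B where "B = A(i := A i - {g}, j := insert g (A j))"
  have "allocation n M B"
    unfolding B_def using alloc ij g by (rule allocation_move_good)
  moreover have "\<forall>k<n. v k (B k) \<ge> v k (A k)"
    using loss gain ij by (simp add: B_def)
  moreover have "v j (B j) > v j (A j)"
    using gain by (simp add: B_def)
  ultimately show False
    using po ij unfolding pareto_optimal_def by blast
qed

lemma allocation_two_iff: "allocation 2 M A \<longleftrightarrow> A 0 \<union> A 1 = M \<and> A 0 \<inter> A 1 = {}"
proof -
  have "{..<2::nat} = {0, 1}" by auto
  then show ?thesis
    unfolding allocation_def by (auto simp: less_2_cases_iff)
qed

definition goods :: "nat set" where
  "goods = {0, 1, 2}"

definition counter_weight :: "nat \<Rightarrow> nat \<Rightarrow> real" where
  "counter_weight i g = (if i = 0 then real g else if g = 0 then 1 else if g = 1 then 0 else 2)"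

definition counter_val :: "nat \<Rightarrow> nat set \<Rightarrow> real" where
  "counter_val i = weight_val goods (counter_weight i)"

lemma counter_val_additive_valuation:
  "valuation goods (counter_val i) \<and> additive_val goods (counter_val i)"
  unfolding counter_val_def
  by (simp add: valuation_weight_val additive_val_weight_val counter_weight_def goods_def)

lemma no_EFX_pareto_optimal_counter_val:
  "\<not> (\<exists>A. allocation 2 goods A \<and> EFX 2 counter_val A \<and> pareto_optimal 2 goods counter_val A)"
proof
  assume "\<exists>A. allocation 2 goods A \<and> EFX 2 counter_val A \<and> pareto_optimal 2 goods counter_val A"
  then obtain A where alloc: "allocation 2 goods A" and efx: "EFX 2 counter_val A"
    and po: "pareto_optimal 2 goods counter_val A" by blast
  note counter_defs = counter_val_def weight_val_def counter_weight_def goods_def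
  have add: "\<forall>k<2. additive_val goods (counter_val k)"
    using counter_val_additive_valuation by blast
  have efx_at: "counter_val i (A j - {g}) \<le> counter_val i (A i)" if "i < 2" "j < 2" "g \<in> A j" for i j g
    using efx that unfolding EFX_def by blast
  have "0 \<notin> A 0" "1 \<notin> A 1"
    using pareto_optimal_worthless_good[OF alloc po add, of 0 1 0]
      pareto_optimal_worthless_good[OF alloc po add, of 1 0 1]
    by (simp_all add: counter_defs)
  with alloc have "A 0 = {1, 2} \<and> A 1 = {0} \<or> A 0 = {1} \<and> A 1 = {0, 2}"
    unfolding allocation_two_iff goods_def set_eq_iff by (metis Int_iff Un_iff empty_iff insert_iff)
  then show False
  proof (elim disjE conjE)
    assume "A 0 = {1, 2}" "A 1 = {0}"
    then show False
      using efx_at[of 1 0 1] by (simp add: counter_defs)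
  next
    assume "A 0 = {1}" "A 1 = {0, 2}"
    then show False
      using efx_at[of 0 1 0] by (simp add: counter_defs)
  qed
qed

theorem theorem5p1:
  shows "\<exists>(M :: nat set) (v :: nat \<Rightarrow> nat set \<Rightarrow> real).
     finite M \<and> (\<forall>i<2. valuation M (v i) \<and> additive_val M (v i)) \<and>
     \<not> (\<exists>A. allocation 2 M A \<and> EFX 2 v A \<and> pareto_optimal 2 M v A)"
  using counter_val_additive_valuation no_EFX_pareto_optimal_counter_val
  by (intro exI[of _ goods] exI[of _ counter_val]) (simp add: goods_def)

end
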